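(* Let $H\le\mathrm{GL}_n(q)$ and suppose that, in a suitable basis of $V=\mathbb{F}_q^n$, every $g\in H$ has the block upper-triangular form $$\begin{pmatrix} g_k & g_{k,k-1} & \cdots & g_{k,1}\\ 0 & g_{k-1} & \cdots & g_{k-1,1}\\ \vdots & & \ddots & \vdots\\ 0 & 0 & \cdots & g_1\end{pmatrix},$$ where each $\gamma_i:H\to\mathrm{GL}_{n_i}(q)$, $g\mapsto g_i$, is an irreducible representation, $g_{i,j}$ is an $n_i\times n_j$ matrix and $n_1+\dots+n_k=n$; put $H_i=\gamma_i(H)$. If for every $i$ there exists $x_i\in\mathrm{GL}_{n_i}(q)$ (respectively $x_i\in\mathrm{SL}_{n_i}(q)$) such that $H_i\cap H_i^{x_i}$ consists of upper triangular matrices, then there exist $x,y\in\mathrm{GL}_n(q)$ (respectively $x,y\in\mathrm{SL}_n(q)$) such that $(H\cap H^x)\cap(H\cap H^x)^y\le D(\mathrm{GL}_n(q))$.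
   Context: $D(\mathrm{GL}_n(q))$ is the group of diagonal matrices (in the chosen basis); $H^x=x^{-1}Hx$. *)

theory Defs
  imports "Jordan_Normal_Form.Determinant"
begin

definition GL_mat :: "nat \<Rightarrow> 'a::field mat set" where
  "GL_mat n = {A \<in> carrier_mat n n. invertible_mat A}"

definition SL_mat :: "nat \<Rightarrow> 'a::field mat set" where
  "SL_mat n = {A \<in> carrier_mat n n. det A = 1}"

definition mat_subgroup :: "nat \<Rightarrow> 'a::field mat set \<Rightarrow> bool" where
  "mat_subgroup n H \<longleftrightarrow> H \<subseteq> GL_mat n \<and> 1\<^sub>m n \<in> H \<and>
     (\<forall>g\<in>H. \<forall>h\<in>H. g * h \<in> H) \<and> (\<forall>g\<in>H. \<exists>h\<in>H. g * h = 1\<^sub>m n)"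

text \<open>H^x = x^{-1} H x, for invertible x (g = x^{-1} h x iff x g = h x).\<close>
definition conj_set :: "nat \<Rightarrow> 'a::field mat \<Rightarrow> 'a mat set \<Rightarrow> 'a mat set" where
  "conj_set n x H = {g \<in> carrier_mat n n. \<exists>h\<in>H. x * g = h * x}"

text \<open>Offset of the j-th diagonal block (blocks listed from the top-left).\<close>
definition blk_off :: "nat list \<Rightarrow> nat \<Rightarrow> nat" where
  "blk_off ns j = sum_list (take j ns)"

definition block_upper :: "nat list \<Rightarrow> 'a::zero mat \<Rightarrow> bool" where
  "block_upper ns g \<longleftrightarrow> (\<forall>a<length ns. \<forall>b<a. \<forall>r c.
      blk_off ns a \<le> r \<and> r < blk_off ns a + ns ! a \<and>
      blk_off ns b \<le> c \<and> c < blk_off ns b + ns ! b \<longrightarrow> g $$ (r, c) = 0)"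

definition diag_block :: "nat list \<Rightarrow> nat \<Rightarrow> 'a mat \<Rightarrow> 'a mat" where
  "diag_block ns i g = mat (ns ! i) (ns ! i)
     (\<lambda>(r, c). g $$ (blk_off ns i + r, blk_off ns i + c))"

definition subspace_vec :: "nat \<Rightarrow> 'a::field vec set \<Rightarrow> bool" where
  "subspace_vec m W \<longleftrightarrow> W \<subseteq> carrier_vec m \<and> 0\<^sub>v m \<in> W \<and>
     (\<forall>v\<in>W. \<forall>w\<in>W. v + w \<in> W) \<and> (\<forall>a. \<forall>v\<in>W. a \<cdot>\<^sub>v v \<in> W)"

definition irreducible_mats :: "nat \<Rightarrow> 'a::field mat set \<Rightarrow> bool" where
  "irreducible_mats m S \<longleftrightarrow> 0 < m \<and>
     (\<forall>W. subspace_vec m W \<and> (\<forall>h\<in>S. \<forall>w\<in>W. h *\<^sub>v w \<in> W)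
        \<longrightarrow> W = {0\<^sub>v m} \<or> W = carrier_vec m)"

end

theory Submission
  imports Defs
begin

text \<open>Take \<open>x = diag(x\<^sub>1, \<dots>, x\<^sub>k)\<close>. The diagonal-block maps \<open>\<gamma>\<^sub>i\<close> are multiplicative on
  block upper triangular matrices, so \<open>x g = h x\<close> with \<open>g, h \<in> H\<close> gives
  \<open>x\<^sub>i \<gamma>\<^sub>i(g) = \<gamma>\<^sub>i(h) x\<^sub>i\<close>; hence every diagonal block of \<open>g \<in> K = H \<inter> H\<^sup>x\<close> lies in
  \<open>H\<^sub>i \<inter> H\<^sub>i\<^bsup>x\<^sub>i\<^esub>\<close>, and \<open>K\<close> consists of upper triangular matrices. Conjugation by an
  antidiagonal matrix \<open>y\<close> (which can be chosen of determinant 1) turns upper into lower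
  triangular matrices, so \<open>K \<inter> K\<^sup>y\<close> is diagonal.\<close>

lemma blk_off_Cons_0 [simp]: "blk_off (m # ns) 0 = 0"
  by (simp add: blk_off_def)

lemma blk_off_Cons_Suc [simp]: "blk_off (m # ns) (Suc i) = m + blk_off ns i"
  by (simp add: blk_off_def)

lemma blk_off_Suc: "i < length ns \<Longrightarrow> blk_off ns (Suc i) = blk_off ns i + ns ! i"
  by (simp add: blk_off_def take_Suc_conv_app_nth)

lemma blk_off_mono: "i \<le> j \<Longrightarrow> blk_off ns i \<le> blk_off ns j"
  by (auto simp: blk_off_def le_iff_add take_add)

lemma blk_end_le_blk_off: "i < j \<Longrightarrow> j < length ns \<Longrightarrow> blk_off ns i + ns ! i \<le> blk_off ns j"
  using blk_off_Suc[of i ns] blk_off_mono[of "Suc i" j ns] by simp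

lemma blk_end_le_sum_list: "i < length ns \<Longrightarrow> blk_off ns i + ns ! i \<le> sum_list ns"
  by (metis blk_off_Suc blk_off_def append_take_drop_id sum_list_append le_add1)

lemma blk_off_locate:
  "r < sum_list ns \<Longrightarrow> \<exists>i<length ns. \<exists>s<ns ! i. r = blk_off ns i + s"
proof (induction ns arbitrary: r)
  case (Cons m ns)
  show ?case
  proof (cases "r < m")
    case False
    with Cons.prems have "r - m < sum_list ns" by simp
    with Cons.IH obtain i s where "i < length ns" "s < ns ! i" "r - m = blk_off ns i + s"
      by blast
    with False show ?thesis by (intro exI[of _ "Suc i"]) auto
  qed (intro exI[of _ 0], simp)
qed simp

lemma diag_block_mat_carrier:
  "list_all2 (\<lambda>A m. A \<in> carrier_mat m m) As ns \<Longrightarrow>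
    diag_block_mat As \<in> carrier_mat (sum_list ns) (sum_list ns)"
  by (induction rule: list_all2_induct) (auto simp: Let_def dim_diag_block_mat)

lemma index_diag_block_mat:
  assumes "list_all2 (\<lambda>A m. A \<in> carrier_mat m m) As ns"
    and "a < length ns" "b < length ns" "r < ns ! a" "c < ns ! b"
  shows "diag_block_mat As $$ (blk_off ns a + r, blk_off ns b + c) =
    (if a = b then As ! a $$ (r, c) else 0)"
  using assms
proof (induction arbitrary: a b rule: list_all2_induct)
  case (Cons A As m ms)
  have As: "diag_block_mat As \<in> carrier_mat (sum_list ms) (sum_list ms)"
    using Cons.hyps(2) by (rule diag_block_mat_carrier)
  have bound: "blk_off ms i + k < sum_list ms" if "i < length ms" "k < ms ! i" for i k
    using blk_end_le_sum_list[OF that(1)] that(2) by simp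
  show ?case
  proof (cases a; cases b)
    fix a' b' assume "a = Suc a'" "b = Suc b'"
    then show ?thesis
      using Cons.prems Cons.hyps(1) As Cons.IH[of a' b'] bound[of a' r] bound[of b' c]
      by (auto simp: Let_def)
  qed (use Cons.prems Cons.hyps(1) As bound in \<open>auto simp: Let_def\<close>)
qed simp

lemma dim_diag_block [simp]:
  "dim_row (diag_block ns i g) = ns ! i" "dim_col (diag_block ns i g) = ns ! i"
  by (simp_all add: diag_block_def)

lemma block_upper_diag_block_mat:
  assumes "list_all2 (\<lambda>A m. A \<in> carrier_mat m m) As ns"
  shows "block_upper ns (diag_block_mat As)"
  unfolding block_upper_def
proof (intro allI impI)
  fix a b r c
  assume ab: "a < length ns" "b < a"
    and rc: "blk_off ns a \<le> r \<and> r < blk_off ns a + ns ! a \<and> blk_off ns b \<le> c \<and> c < blk_off ns b + ns ! b"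
  then have "diag_block_mat As $$ (blk_off ns a + (r - blk_off ns a), blk_off ns b + (c - blk_off ns b)) = 0"
    by (subst index_diag_block_mat[OF assms]) auto
  with rc show "diag_block_mat As $$ (r, c) = 0" by simp
qed

lemma diag_block_diag_block_mat:
  assumes "list_all2 (\<lambda>A m. A \<in> carrier_mat m m) As ns" "i < length ns"
  shows "diag_block ns i (diag_block_mat As) = As ! i"
proof -
  have "As ! i \<in> carrier_mat (ns ! i) (ns ! i)"
    using assms by (simp add: list_all2_conv_all_nth)
  then show ?thesis
    using index_diag_block_mat[OF assms(1,2,2)] by (auto simp: diag_block_def)
qed

lemma det_diag_block_mat:
  fixes As :: "'a::idom mat list"
  assumes "list_all2 (\<lambda>A m. A \<in> carrier_mat m m) As ns"
  shows "det (diag_block_mat As) = prod_list (map det As)"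
  using assms
proof (induction rule: list_all2_induct)
  case (Cons A As m ms)
  then show ?case
    using diag_block_mat_carrier[OF Cons.hyps(2)]
    by (auto simp: Let_def det_four_block_mat_upper_right_zero)
qed simp

lemma diag_block_mult:
  assumes g: "g \<in> carrier_mat (sum_list ns) (sum_list ns)" "block_upper ns g"
    and h: "h \<in> carrier_mat (sum_list ns) (sum_list ns)" "block_upper ns h"
    and i: "i < length ns"
  shows "diag_block ns i (g * h) = diag_block ns i g * diag_block ns i h"
proof (rule eq_matI)
  fix r c assume "r < dim_row (diag_block ns i g * diag_block ns i h)"
    "c < dim_col (diag_block ns i g * diag_block ns i h)"
  then have r: "r < ns ! i" and c: "c < ns ! i" by auto
  let ?o = "blk_off ns i"
  let ?f = "\<lambda>k. g $$ (?o + r, k) * h $$ (k, ?o + c)"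
  have end_le: "?o + ns ! i \<le> sum_list ns" by (rule blk_end_le_sum_list[OF i])
  have outside: "?f k = 0" if k: "k < sum_list ns" "k \<notin> {?o..<?o + ns ! i}" for k
  proof -
    obtain b s where b: "b < length ns" "s < ns ! b" "k = blk_off ns b + s"
      using blk_off_locate[OF k(1)] by blast
    with k(2) have "b \<noteq> i" by auto
    then consider "b < i" | "i < b" by linarith
    then show ?thesis
    proof cases
      case 1
      with blk_end_le_blk_off[OF 1 i] have "g $$ (?o + r, k) = 0"
        using g(2) i r b unfolding block_upper_def by auto
      then show ?thesis by simp
    next
      case 2
      with blk_end_le_blk_off[OF 2 b(1)] have "h $$ (k, ?o + c) = 0"
        using h(2) b c unfolding block_upper_def by auto
      then show ?thesis by simp
    qed
  qed
  have "diag_block ns i (g * h) $$ (r, c) = (\<Sum>k = 0..<sum_list ns. ?f k)"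
    using g h r c end_le by (simp add: diag_block_def scalar_prod_def)
  also have "\<dots> = (\<Sum>k = ?o..<?o + ns ! i. ?f k)"
    using end_le outside by (intro sum.mono_neutral_right) auto
  also have "\<dots> = (\<Sum>k = 0..<ns ! i. ?f (?o + k))"
    using sum.shift_bounds_nat_ivl[of ?f 0 ?o "ns ! i"] by (simp add: add.commute)
  also have "\<dots> = (diag_block ns i g * diag_block ns i h) $$ (r, c)"
    using r c by (simp add: diag_block_def scalar_prod_def)
  finally show "diag_block ns i (g * h) $$ (r, c) = (diag_block ns i g * diag_block ns i h) $$ (r, c)" .
qed auto

lemma upper_triangular_if_diag_blocks:
  assumes g: "g \<in> carrier_mat (sum_list ns) (sum_list ns)" "block_upper ns g"
    and blocks: "\<forall>i<length ns. upper_triangular (diag_block ns i g)"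
  shows "upper_triangular g"
proof (rule upper_triangularI)
  fix r c assume "c < r" "r < dim_row g"
  with g(1) obtain a s b t where
    a: "a < length ns" "s < ns ! a" "r = blk_off ns a + s" and
    b: "b < length ns" "t < ns ! b" "c = blk_off ns b + t"
    using blk_off_locate[of r ns] blk_off_locate[of c ns] by fastforce
  consider "b < a" | "a = b" | "a < b" by linarith
  then show "g $$ (r, c) = 0"
  proof cases
    case 1
    with a b g(2) show ?thesis unfolding block_upper_def by auto
  next
    case 2
    with a b \<open>c < r\<close> have "diag_block ns a g $$ (s, t) = 0"
      using blocks by (intro upper_triangularD) auto
    with a b 2 show ?thesis by (simp add: diag_block_def)
  next
    case 3
    with blk_end_le_blk_off[OF 3 b(1)] a b \<open>c < r\<close> show ?thesis by linarith
  qed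
qed

lemma upper_triangular_if_conj_diag_block_mat:
  assumes H: "\<forall>h\<in>H. h \<in> carrier_mat (sum_list ns) (sum_list ns) \<and> block_upper ns h"
    and xs: "list_all2 (\<lambda>A m. A \<in> carrier_mat m m) xs ns"
    and upper: "\<forall>i<length ns. \<forall>h \<in> diag_block ns i ` H \<inter> conj_set (ns ! i) (xs ! i) (diag_block ns i ` H).
                  upper_triangular h"
    and g: "g \<in> H \<inter> conj_set (sum_list ns) (diag_block_mat xs) H"
  shows "upper_triangular g"
proof (rule upper_triangular_if_diag_blocks)
  obtain h where h: "h \<in> H" "diag_block_mat xs * g = h * diag_block_mat xs"
    using g by (auto simp: conj_set_def)
  have x: "diag_block_mat xs \<in> carrier_mat (sum_list ns) (sum_list ns)" "block_upper ns (diag_block_mat xs)"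
    using xs by (rule diag_block_mat_carrier, rule block_upper_diag_block_mat)
  show "g \<in> carrier_mat (sum_list ns) (sum_list ns)" "block_upper ns g"
    using g H by auto
  show "\<forall>i<length ns. upper_triangular (diag_block ns i g)"
  proof (intro allI impI)
    fix i assume i: "i < length ns"
    have "xs ! i * diag_block ns i g = diag_block ns i h * xs ! i"
      using diag_block_mult[OF x _ _ i, of g] diag_block_mult[OF _ _ x i, of h] h g H
      by (auto simp: diag_block_diag_block_mat[OF xs i])
    with h(1) have "diag_block ns i g \<in> conj_set (ns ! i) (xs ! i) (diag_block ns i ` H)"
      by (auto simp: conj_set_def)
    with g i upper show "upper_triangular (diag_block ns i g)" by blast
  qed
qed

definition antidiagonal_mat :: "'a::zero mat \<Rightarrow> bool" where
  "antidiagonal_mat A \<longleftrightarrow>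
     (\<forall>i<dim_row A. \<forall>j<dim_col A. A $$ (i, j) \<noteq> 0 \<longleftrightarrow> i + j + 1 = dim_row A)"

lemma antidiagonal_mat_nonzero_iff:
  "y \<in> carrier_mat n n \<Longrightarrow> antidiagonal_mat y \<Longrightarrow> i < n \<Longrightarrow> j < n \<Longrightarrow>
    y $$ (i, j) \<noteq> 0 \<longleftrightarrow> i + j + 1 = n"
  by (simp add: antidiagonal_mat_def)

lemma antidiagonal_mat_mult_left:
  assumes y: "y \<in> carrier_mat n n" "antidiagonal_mat y" and g: "g \<in> carrier_mat n m"
    and "i < n" "j < m"
  shows "(y * g) $$ (i, j) = y $$ (i, n - 1 - i) * g $$ (n - 1 - i, j)"
proof -
  have "(y * g) $$ (i, j) = (\<Sum>t = 0..<n. y $$ (i, t) * g $$ (t, j))"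
    using assms by (simp add: scalar_prod_def)
  also have "\<dots> = (\<Sum>t \<in> {n - 1 - i}. y $$ (i, t) * g $$ (t, j))"
  proof (intro sum.mono_neutral_right ballI)
    fix t assume "t \<in> {0..<n} - {n - 1 - i}"
    with assms antidiagonal_mat_nonzero_iff[OF y, of i t] have "y $$ (i, t) = 0" by auto
    then show "y $$ (i, t) * g $$ (t, j) = 0" by simp
  qed (use \<open>i < n\<close> in auto)
  finally show ?thesis by simp
qed

lemma antidiagonal_mat_mult_right:
  assumes y: "y \<in> carrier_mat n n" "antidiagonal_mat y" and k: "k \<in> carrier_mat m n"
    and "i < m" "j < n"
  shows "(k * y) $$ (i, j) = k $$ (i, n - 1 - j) * y $$ (n - 1 - j, j)"
proof -
  have "(k * y) $$ (i, j) = (\<Sum>t = 0..<n. k $$ (i, t) * y $$ (t, j))"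
    using assms by (simp add: scalar_prod_def)
  also have "\<dots> = (\<Sum>t \<in> {n - 1 - j}. k $$ (i, t) * y $$ (t, j))"
  proof (intro sum.mono_neutral_right ballI)
    fix t assume "t \<in> {0..<n} - {n - 1 - j}"
    with assms antidiagonal_mat_nonzero_iff[OF y, of t j] have "y $$ (t, j) = 0" by auto
    then show "k $$ (i, t) * y $$ (t, j) = 0" by simp
  qed (use \<open>j < n\<close> in auto)
  finally show ?thesis by simp
qed

lemma diagonal_mat_if_conj_antidiagonal:
  fixes y :: "'a::field mat"
  assumes K: "\<forall>k\<in>K. k \<in> carrier_mat n n \<and> upper_triangular k"
    and y: "y \<in> carrier_mat n n" "antidiagonal_mat y"
    and g: "g \<in> K \<inter> conj_set n y K"
  shows "diagonal_mat g"
  unfolding diagonal_mat_def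
proof (intro allI impI)
  obtain k where k: "k \<in> K" "y * g = k * y"
    using g by (auto simp: conj_set_def)
  have gc: "g \<in> carrier_mat n n" and kc: "k \<in> carrier_mat n n"
    using g k(1) K by auto
  fix a b assume ab: "a < dim_row g" "b < dim_col g" "a \<noteq> b"
  then consider "b < a" | "a < b" by linarith
  then show "g $$ (a, b) = 0"
  proof cases
    case 1
    with g K ab show ?thesis by (auto intro: upper_triangularD)
  next
    case 2
    \<comment> \<open>In entry \<open>(n-1-a, b)\<close> of \<open>y g = k y\<close> the left side is a nonzero multiple of \<open>g(a,b)\<close>,
      the right side one of an entry of \<open>k\<close> below the diagonal.\<close>
    let ?i = "n - 1 - a"
    have "y $$ (?i, a) * g $$ (a, b) = (y * g) $$ (?i, b)"
      using antidiagonal_mat_mult_left[OF y gc, of ?i b] ab gc by auto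
    also have "\<dots> = k $$ (?i, n - 1 - b) * y $$ (n - 1 - b, b)"
      using antidiagonal_mat_mult_right[OF y kc, of ?i b] ab gc k(2) by auto
    also have "k $$ (?i, n - 1 - b) = 0"
      using K k(1) 2 ab gc by (intro upper_triangularD) auto
    moreover have "y $$ (?i, a) \<noteq> 0"
      using antidiagonal_mat_nonzero_iff[OF y, of ?i a] ab gc by auto
    ultimately show ?thesis by simp
  qed
qed

lemma ex_antidiagonal_mat_det_1:
  "\<exists>y :: 'a::idom mat. y \<in> carrier_mat n n \<and> antidiagonal_mat y \<and> det y = 1"
proof (cases "n = 0")
  case True
  then show ?thesis by (intro exI[of _ "1\<^sub>m 0"]) (auto simp: antidiagonal_mat_def)
next
  case False
  define J :: "'a mat" where "J = mat n n (\<lambda>(i, j). if i + j + 1 = n then 1 else 0)"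
  have J: "J \<in> carrier_mat n n" "antidiagonal_mat J"
    by (auto simp: J_def antidiagonal_mat_def)
  have "J * J = 1\<^sub>m n"
    using antidiagonal_mat_mult_left[OF J J(1)] J by (intro eq_matI) (auto simp: J_def)
  then have det_J: "det J * det J = 1"
    using det_mult[OF J(1) J(1)] by simp
  \<comment> \<open>\<open>J\<close> is an involution, so scaling one of its rows by \<open>det J = \<plusminus>1\<close> gives determinant 1.\<close>
  define y where "y = multrow 0 (det J) J"
  have "y \<in> carrier_mat n n" "antidiagonal_mat y"
    using J det_J by (auto simp: y_def antidiagonal_mat_def)
  moreover have "det y = 1"
    using det_multrow[of 0 n J "det J"] False J det_J by (simp add: y_def)
  ultimately show ?thesis by blast
qed

lemma invertible_mat_iff_det_nonzero:
  fixes A :: "'a::field mat"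
  assumes A: "A \<in> carrier_mat n n"
  shows "invertible_mat A \<longleftrightarrow> det A \<noteq> 0"
proof
  assume "invertible_mat A"
  then obtain B where AB: "A * B = 1\<^sub>m n" and B: "B \<in> carrier_mat n n"
    using A unfolding invertible_mat_def inverts_mat_def
    by (metis carrier_matD carrier_matI index_mult_mat(2,3) index_one_mat(2,3))
  with det_mult[OF A B] show "det A \<noteq> 0" by auto
next
  assume "det A \<noteq> 0"
  from det_non_zero_imp_unit[OF A this, of n]
  obtain B where "B \<in> carrier_mat n n" "B * A = 1\<^sub>m n" "A * B = 1\<^sub>m n"
    unfolding Units_def ring_mat_def by auto
  with A show "invertible_mat A"
    unfolding invertible_mat_def inverts_mat_def by auto
qed

lemma GL_mat_det: "GL_mat n = {A \<in> carrier_mat n n. det A \<noteq> 0}"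
  by (auto simp: GL_mat_def invertible_mat_iff_det_nonzero)

lemma GL_mat_subset_carrier: "GL_mat n \<subseteq> carrier_mat n n"
  by (auto simp: GL_mat_def)

lemma SL_mat_subset_carrier: "SL_mat n \<subseteq> carrier_mat n n"
  by (auto simp: SL_mat_def)

lemma SL_mat_subset_GL_mat: "SL_mat n \<subseteq> GL_mat n"
  by (auto simp: GL_mat_det SL_mat_def)

lemma diag_block_mat_GL_mat:
  assumes "list_all2 (\<lambda>A m. A \<in> GL_mat m) As ns"
  shows "diag_block_mat As \<in> GL_mat (sum_list ns)"
proof -
  have As: "list_all2 (\<lambda>A m. A \<in> carrier_mat m m) As ns" and "0 \<notin> det ` set As"
    using assms by (auto simp: list_all2_conv_all_nth GL_mat_det in_set_conv_nth)
  with det_diag_block_mat[OF As] diag_block_mat_carrier[OF As] show ?thesis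
    by (simp add: GL_mat_det prod_list_zero_iff)
qed

lemma diag_block_mat_SL_mat:
  assumes "list_all2 (\<lambda>A m. A \<in> SL_mat m) As ns"
  shows "diag_block_mat As \<in> SL_mat (sum_list ns)"
proof -
  have As: "list_all2 (\<lambda>A m. A \<in> carrier_mat m m) As ns" and det_1: "\<forall>A \<in> set As. det A = 1"
    using assms by (auto simp: list_all2_conv_all_nth SL_mat_def in_set_conv_nth)
  from det_1 have "prod_list (map det As) = 1"
    by (induction As) auto
  with det_diag_block_mat[OF As] diag_block_mat_carrier[OF As] show ?thesis
    by (simp add: SL_mat_def)
qed

lemma list_all2_choice:
  assumes "\<forall>i<length ns. \<exists>x\<in>S (ns ! i). P i x"
  shows "\<exists>xs. list_all2 (\<lambda>x m. x \<in> S m) xs ns \<and> (\<forall>i<length ns. P i (xs ! i))"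
proof -
  from assms have "\<forall>i<length ns. \<exists>x. x \<in> S (ns ! i) \<and> P i x"
    by (simp only: Bex_def)
  then obtain xs where "length xs = length ns" "\<forall>i<length ns. xs ! i \<in> S (ns ! i) \<and> P i (xs ! i)"
    unfolding Skolem_list_nth by (elim exE conjE)
  then show ?thesis by (auto simp: list_all2_conv_all_nth)
qed

lemma diagonal_mat_if_double_conj:
  assumes H: "\<forall>h\<in>H. h \<in> carrier_mat n n \<and> block_upper ns h" and n: "sum_list ns = n"
    and xs: "list_all2 (\<lambda>A m. A \<in> carrier_mat m m) xs ns"
    and upper: "\<forall>i<length ns. \<forall>h \<in> diag_block ns i ` H \<inter> conj_set (ns ! i) (xs ! i) (diag_block ns i ` H).
                  upper_triangular h"
    and y: "y \<in> carrier_mat n n" "antidiagonal_mat y"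
  defines "K \<equiv> H \<inter> conj_set n (diag_block_mat xs) H"
  shows "\<forall>g \<in> K \<inter> conj_set n y K. diagonal_mat g"
proof
  have "\<forall>k\<in>K. k \<in> carrier_mat n n \<and> upper_triangular k"
    using upper_triangular_if_conj_diag_block_mat[OF H[folded n] xs upper]
    by (auto simp: K_def conj_set_def n)
  then show "diagonal_mat g" if "g \<in> K \<inter> conj_set n y K" for g
    using diagonal_mat_if_conj_antidiagonal[OF _ y that] by blast
qed

theorem mainTheorem10:
  fixes H :: "'a::{finite, field} mat set" and n :: nat and ns :: "nat list"
  assumes "mat_subgroup n H"
    and "sum_list ns = n"
    and "\<forall>g\<in>H. block_upper ns g"
    and "\<forall>i<length ns. irreducible_mats (ns ! i) (diag_block ns i ` H)"
  shows "((\<forall>i<length ns. \<exists>xi\<in>GL_mat (ns ! i).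
              (\<forall>h \<in> diag_block ns i ` H \<inter> conj_set (ns ! i) xi (diag_block ns i ` H).
                 upper_triangular h))
          \<longrightarrow> (\<exists>x\<in>GL_mat n. \<exists>y\<in>GL_mat n.
                \<forall>g \<in> (H \<inter> conj_set n x H) \<inter> conj_set n y (H \<inter> conj_set n x H).
                   diagonal_mat g))
       \<and> ((\<forall>i<length ns. \<exists>xi\<in>SL_mat (ns ! i).
              (\<forall>h \<in> diag_block ns i ` H \<inter> conj_set (ns ! i) xi (diag_block ns i ` H).
                 upper_triangular h))
          \<longrightarrow> (\<exists>x\<in>SL_mat n. \<exists>y\<in>SL_mat n.
                \<forall>g \<in> (H \<inter> conj_set n x H) \<inter> conj_set n y (H \<inter> conj_set n x H).
                   diagonal_mat g))"
proof -
  let ?upper = "\<lambda>i xi. \<forall>h \<in> diag_block ns i ` H \<inter> conj_set (ns ! i) xi (diag_block ns i ` H).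
                 upper_triangular h"
  have H: "\<forall>h\<in>H. h \<in> carrier_mat n n \<and> block_upper ns h"
    using assms(1,3) by (auto simp: mat_subgroup_def GL_mat_def)
  obtain y :: "'a mat" where y: "y \<in> SL_mat n" "y \<in> carrier_mat n n" "antidiagonal_mat y"
    using ex_antidiagonal_mat_det_1[of n] by (auto simp: SL_mat_def)
  have double_conj: "\<exists>x\<in>G n. \<exists>y\<in>G n. \<forall>g \<in> (H \<inter> conj_set n x H) \<inter> conj_set n y (H \<inter> conj_set n x H). diagonal_mat g"
    if blocks: "\<forall>i<length ns. \<exists>xi\<in>G (ns ! i). ?upper i xi" and G: "\<And>m. G m \<subseteq> carrier_mat m m" "y \<in> G n"
      "\<And>xs. list_all2 (\<lambda>A m. A \<in> G m) xs ns \<Longrightarrow> diag_block_mat xs \<in> G n"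
    for G :: "nat \<Rightarrow> 'a mat set"
  proof -
    obtain xs where xs: "list_all2 (\<lambda>A m. A \<in> G m) xs ns" "\<forall>i<length ns. ?upper i (xs ! i)"
      using list_all2_choice[OF blocks] by blast
    have "list_all2 (\<lambda>A m. A \<in> carrier_mat m m) xs ns"
      using xs(1) by (rule list_all2_mono) (use G(1) in blast)
    from diagonal_mat_if_double_conj[OF H assms(2) this xs(2) y(2,3)] G(2) G(3)[OF xs(1)]
    show ?thesis by blast
  qed
  have "y \<in> GL_mat n"
    using y(1) SL_mat_subset_GL_mat by blast
  then show ?thesis
    using double_conj[OF _ GL_mat_subset_carrier _ diag_block_mat_GL_mat[of _ ns, unfolded assms(2)]]
      double_conj[OF _ SL_mat_subset_carrier y(1) diag_block_mat_SL_mat[of _ ns, unfolded assms(2)]]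
    by blast
qed

end
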